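(* There exists a set $\mathcal{A}\subset\mathbb{R}^{n\times n}$ of Lebesgue measure zero such that the following holds. Let $S\subset\mathbb{R}^n$ be a polyhedron, $U_0\subset\mathbb{R}^{n\times n}$ a polyhedron of matrices, $A_\star\in U_0\setminus\mathcal{A}$, and let $F\subseteq S_0^\infty=\{x\in S\mid A^tx\in S\ \forall A\in U_0,\ \forall t\ge1\}$ be a full-dimensional set. If $x$ is drawn at random from $F$ according to any distribution absolutely continuous with respect to Lebesgue measure, then (the trajectory from $x$ is infinite-step safe, and) almost surely the matrix $[x,A_\star x,\dots,A_\star^{n-1}x]$ is invertible, so that $A_\star$ is recovered from the single observed trajectory $x,A_\star x,\dots,A_\star^nx$ as $A_\star=[A_\star x,\dots,A_\star^nx]\,[x,A_\star x,\dots,A_\star^{n-1}x]^{-1}$.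
   Context: Unknown linear system $x_{t+1}=A_\star x_t$; $S_0^\infty$ is the set of initial points whose entire trajectories remain in the safety region $S$ under every matrix in the uncertainty set $U_0$. Full-dimensional means having nonempty interior. *)

theory Defs
  imports "HOL-Probability.Probability"
begin

definition traj :: "real^'n^'n \<Rightarrow> nat \<Rightarrow> real^'n \<Rightarrow> real^'n" where
  "traj A t x = (((*v) A) ^^ t) x"

definition safe_inf :: "(real^'n) set \<Rightarrow> (real^'n^'n) set \<Rightarrow> (real^'n) set" where
  "safe_inf S U0 = {x \<in> S. \<forall>A\<in>U0. \<forall>t::nat. t \<ge> 1 \<longrightarrow> traj A t x \<in> S}"

text \<open>Krylov/trajectory data matrix [A^k x, A^(k+1) x, ..., A^(k+n-1) x];
  column j is A^(k + \<rho> j) x, where \<rho> enumerates the column index type by 0..n-1.\<close>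
definition data_matrix :: "('n \<Rightarrow> nat) \<Rightarrow> real^'n^'n \<Rightarrow> nat \<Rightarrow> real^'n \<Rightarrow> real^'n^'n" where
  "data_matrix \<rho> A k x = (\<chi> i j. traj A (k + \<rho> j) x $ i)"

end

theory Submission
  imports Defs "HOL-Computational_Algebra.Polynomial" "HOL-Analysis.Weierstrass_Theorems"
begin

text \<open>The Krylov determinant \<open>det [x, A x, \<dots>, A\<^sup>n\<^sup>-\<^sup>1 x]\<close> is a polynomial in \<open>x\<close> for
  fixed \<open>A\<close> and in \<open>A\<close> for fixed \<open>x\<close>, and a real polynomial that does not vanish identically
  vanishes only on a Lebesgue null set: by Fubini it suffices that almost every line parallel to
  a coordinate axis meets the zero set in a null set, and on such a line the polynomial is a
  univariate one whose coefficients are, by induction on the number of coordinates, almost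
  everywhere not all zero. For the nilpotent shift \<open>S\<close> and the first basis vector \<open>e\<^sub>0\<close> the
  Krylov matrix is the identity, so \<open>\<A> = {A. det [e\<^sub>0, A e\<^sub>0, \<dots>] = 0}\<close> is null. For \<open>A \<notin> \<A>\<close>
  the singular \<open>x\<close> form a Lebesgue null set, hence a \<open>P\<close>-null set, and for the others
  \<open>A [x, \<dots>, A\<^sup>n\<^sup>-\<^sup>1 x] = [A x, \<dots>, A\<^sup>n x]\<close> can be solved for \<open>A\<close>.\<close>

text \<open>Polynomials in the coordinates \<open>x \<bullet> b\<close>, \<open>b \<in> J\<close>; restricting the coordinates to \<open>J\<close> makes
  induction on \<open>J\<close> possible.\<close>
inductive coord_polynomial :: "'a::euclidean_space set \<Rightarrow> ('a \<Rightarrow> real) \<Rightarrow> bool" for J where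
  const: "coord_polynomial J (\<lambda>_. c)"
| coord: "b \<in> J \<Longrightarrow> coord_polynomial J (\<lambda>x. x \<bullet> b)"
| add: "coord_polynomial J f \<Longrightarrow> coord_polynomial J g \<Longrightarrow> coord_polynomial J (\<lambda>x. f x + g x)"
| mult: "coord_polynomial J f \<Longrightarrow> coord_polynomial J g \<Longrightarrow> coord_polynomial J (\<lambda>x. f x * g x)"

lemma coord_polynomial_sum:
  "finite I \<Longrightarrow> (\<And>i. i \<in> I \<Longrightarrow> coord_polynomial J (f i)) \<Longrightarrow> coord_polynomial J (\<lambda>x. \<Sum>i\<in>I. f i x)"
  by (induction I rule: finite_induct)
    (simp_all add: coord_polynomial.const[of J 0, simplified] coord_polynomial.add)

lemma real_polynomial_function_imp_coord_polynomial:
  fixes f :: "'a::euclidean_space \<Rightarrow> real"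
  assumes "real_polynomial_function f"
  shows "coord_polynomial Basis f"
  using assms
proof (induction rule: real_polynomial_function.induct)
  case (linear f)
  have repr: "(\<lambda>x. \<Sum>b\<in>Basis. (x \<bullet> b) * f b) = f"
  proof
    fix x
    have "(\<Sum>b\<in>Basis. (x \<bullet> b) * f b) = f (\<Sum>b\<in>Basis. (x \<bullet> b) *\<^sub>R b)"
      using linear.hyps by (simp add: bounded_linear.linear linear_sum linear_scale)
    then show "(\<Sum>b\<in>Basis. (x \<bullet> b) * f b) = f x"
      by (simp add: euclidean_representation)
  qed
  have "coord_polynomial Basis (\<lambda>x. \<Sum>b\<in>Basis. (x \<bullet> b) * f b)"
    by (intro coord_polynomial_sum coord_polynomial.mult coord_polynomial.coord coord_polynomial.const) auto
  then show ?case unfolding repr .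
next
  case (const c)
  show ?case by (rule coord_polynomial.const)
next
  case (add f g)
  show ?case by (rule coord_polynomial.add[OF add.IH])
next
  case (mult f g)
  show ?case by (rule coord_polynomial.mult[OF mult.IH])
qed

lemma continuous_on_coord_polynomial: "coord_polynomial J f \<Longrightarrow> continuous_on UNIV f"
  by (induction rule: coord_polynomial.induct) (auto intro!: continuous_intros)

lemma coord_polynomial_empty_imp_constant: "coord_polynomial {} f \<Longrightarrow> \<exists>c. f = (\<lambda>_. c)"
  by (induction rule: coord_polynomial.induct) auto

lemma coord_polynomial_translate_invariant:
  assumes "coord_polynomial J f" "J \<subseteq> Basis" "b \<in> Basis" "b \<notin> J"
  shows "f (x + s *\<^sub>R b) = f x"
  using assms
proof (induction rule: coord_polynomial.induct)
  case (coord b')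
  then have "b \<bullet> b' = 0" by (metis inner_not_same_Basis subsetD)
  then show ?case by (simp add: inner_add_left)
qed auto

lemma coord_polynomial_as_poly:
  assumes "coord_polynomial J f"
  obtains P where "\<And>x. f x = poly (P x) (x \<bullet> b)" "\<And>k. coord_polynomial (J - {b}) (\<lambda>x. coeff (P x) k)"
proof -
  have "\<exists>P. (\<forall>x. f x = poly (P x) (x \<bullet> b)) \<and> (\<forall>k. coord_polynomial (J - {b}) (\<lambda>x. coeff (P x) k))"
    using assms
  proof (induction rule: coord_polynomial.induct)
    case (const c)
    show ?case
      by (rule exI[of _ "\<lambda>x. [:c:]"]) (auto intro: coord_polynomial.const)
  next
    case (coord b')
    show ?case
    proof (cases "b' = b")
      case True
      show ?thesis
        by (rule exI[of _ "\<lambda>x. [:0, 1:]"]) (auto simp: True intro: coord_polynomial.const)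
    next
      case False
      have "coord_polynomial (J - {b}) (\<lambda>x. coeff [:x \<bullet> b':] k)" for k
        using False coord coord_polynomial.const[of "J - {b}" 0]
        by (cases k) (auto intro: coord_polynomial.coord)
      then show ?thesis
        by (intro exI[of _ "\<lambda>x. [:x \<bullet> b':]"]) auto
    qed
  next
    case (add f g)
    then obtain P Q where
      "\<forall>x. f x = poly (P x) (x \<bullet> b)" "\<forall>k. coord_polynomial (J - {b}) (\<lambda>x. coeff (P x) k)"
      "\<forall>x. g x = poly (Q x) (x \<bullet> b)" "\<forall>k. coord_polynomial (J - {b}) (\<lambda>x. coeff (Q x) k)"
      by blast
    then show ?case
      by (intro exI[of _ "\<lambda>x. P x + Q x"]) (auto intro!: coord_polynomial.add)
  next
    case (mult f g)
    then obtain P Q where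
      "\<forall>x. f x = poly (P x) (x \<bullet> b)" "\<forall>k. coord_polynomial (J - {b}) (\<lambda>x. coeff (P x) k)"
      "\<forall>x. g x = poly (Q x) (x \<bullet> b)" "\<forall>k. coord_polynomial (J - {b}) (\<lambda>x. coeff (Q x) k)"
      by blast
    then show ?case
      by (intro exI[of _ "\<lambda>x. P x * Q x"])
         (auto simp: coeff_mult intro!: coord_polynomial.mult coord_polynomial_sum)
  qed
  then show ?thesis using that by blast
qed

lemma null_sets_lborel_if_AE_line_sections_null:
  fixes Z :: "'a::euclidean_space set" and b :: 'a
  assumes Z: "Z \<in> sets borel"
    and sections: "AE y in lborel. {t::real. y + t *\<^sub>R b \<in> Z} \<in> null_sets lborel"
  shows "Z \<in> null_sets lborel"
proof -
  define W where "W = (\<lambda>(y, t). y + t *\<^sub>R b) -` Z"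
  have W: "W \<in> sets (lborel \<Otimes>\<^sub>M (lborel :: real measure))"
  proof -
    have "(\<lambda>(y, t). y + t *\<^sub>R b) \<in> borel_measurable (borel :: ('a \<times> real) measure)"
      by (intro borel_measurable_continuous_onI) (auto intro!: continuous_intros simp: case_prod_unfold)
    then show ?thesis
      using Z measurable_sets[of _ borel borel Z] unfolding W_def by (simp only: lborel_prod sets_lborel) simp
  qed
  have "emeasure (lborel \<Otimes>\<^sub>M lborel) W = (\<integral>\<^sup>+y. emeasure lborel (Pair y -` W) \<partial>lborel)"
    by (rule lborel.emeasure_pair_measure_alt[OF W])
  also have "\<dots> = (\<integral>\<^sup>+(y::'a). 0 \<partial>lborel)"
  proof (rule nn_integral_cong_AE)
    have "Pair y -` W = {t. y + t *\<^sub>R b \<in> Z}" for y by (auto simp: W_def)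
    with sections show "AE y in lborel. emeasure lborel (Pair y -` W) = 0" by auto
  qed
  finally have W0: "emeasure (lborel \<Otimes>\<^sub>M (lborel :: real measure)) W = 0" by simp
  \<comment> \<open>Sliced the other way, every horizontal section of W is a translate of Z.\<close>
  have "emeasure (lborel \<Otimes>\<^sub>M lborel) W = (\<integral>\<^sup>+t. emeasure lborel ((\<lambda>y. (y, t)) -` W) \<partial>lborel)"
    by (rule pair_sigma_finite.emeasure_pair_measure_alt2[OF _ W])
       (simp add: pair_sigma_finite_def lborel.sigma_finite_measure_axioms)
  also have "\<dots> = (\<integral>\<^sup>+(t::real). emeasure lborel Z \<partial>lborel)"
  proof (rule nn_integral_cong)
    fix t :: real
    have "(\<lambda>y. (y, t)) -` W = (+) (t *\<^sub>R b) -` Z \<inter> space lborel"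
      by (auto simp: W_def add.commute)
    then have "emeasure lborel ((\<lambda>y. (y, t)) -` W) = emeasure (distr lborel borel ((+) (t *\<^sub>R b))) Z"
      using Z by (subst emeasure_distr) auto
    then show "emeasure lborel ((\<lambda>y. (y, t)) -` W) = emeasure lborel Z"
      by (simp add: lborel_distr_plus)
  qed
  also have "\<dots> = emeasure lborel Z * \<infinity>"
    by (simp add: nn_integral_const)
  finally have "emeasure lborel Z * \<infinity> = 0"
    using W0 by simp
  then have "emeasure lborel Z = 0"
    using mult_eq_0_iff[of "emeasure lborel Z" "\<infinity>::ennreal"] by simp
  then show ?thesis using Z by (auto simp: null_sets_def)
qed

lemma coord_polynomial_zero_set_null:
  fixes J :: "'a::euclidean_space set"
  assumes "finite J" "J \<subseteq> Basis" "coord_polynomial J f" "f x0 \<noteq> 0"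
  shows "{x. f x = 0} \<in> null_sets lborel"
  using assms
proof (induction J arbitrary: f x0 rule: finite_induct)
  case empty
  then obtain c where "f = (\<lambda>_. c)" using coord_polynomial_empty_imp_constant by blast
  with empty.prems(3) show ?case by simp
next
  case (insert b J)
  have b: "b \<in> Basis" and J: "J \<subseteq> Basis" using insert.prems(1) by auto
  obtain P where f: "\<And>x. f x = poly (P x) (x \<bullet> b)"
    and coeffs: "\<And>k. coord_polynomial J (\<lambda>x. coeff (P x) k)"
    using coord_polynomial_as_poly[OF insert.prems(2), of b] insert.hyps(2)
    by (metis Diff_insert_absorb)
  have "P x0 \<noteq> 0" using insert.prems(3) f[of x0] by auto
  then obtain k where k: "coeff (P x0) k \<noteq> 0" using leading_coeff_0_iff by blast
  have P_translate: "P (y + t *\<^sub>R b) = P y" for y t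
    by (rule poly_eqI) (rule coord_polynomial_translate_invariant[OF coeffs J b insert.hyps(2)])
  have "f \<in> borel_measurable borel"
    using continuous_on_coord_polynomial[OF insert.prems(2)] by (rule borel_measurable_continuous_onI)
  then have Z: "{x. f x = 0} \<in> sets borel"
    using borel_measurable_vimage[of f borel 0] by (simp add: vimage_def)
  show ?case
  proof (rule null_sets_lborel_if_AE_line_sections_null[OF Z, of b])
    have "{x. coeff (P x) k = 0} \<in> null_sets lborel"
      using insert.IH[OF J coeffs k] .
    then have "AE y in lborel. P y \<noteq> 0"
      by (rule AE_I') auto
    then show "AE y in lborel. {t. y + t *\<^sub>R b \<in> {x. f x = 0}} \<in> null_sets lborel"
    proof eventually_elim
      case (elim y)
      have "f (y + t *\<^sub>R b) = poly (P y) (y \<bullet> b + t)" for t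
        using f[of "y + t *\<^sub>R b"] P_translate[of y t] b by (simp add: inner_add_left)
      then have "{t. y + t *\<^sub>R b \<in> {x. f x = 0}} = (\<lambda>r. r - y \<bullet> b) ` {r. poly (P y) r = 0}"
        by (auto simp: image_def)
      then show ?case
        using poly_roots_finite[OF elim] by (simp add: finite_imp_null_set_lborel)
    qed
  qed
qed

lemma real_polynomial_function_zero_set_null:
  fixes f :: "'a::euclidean_space \<Rightarrow> real"
  assumes "real_polynomial_function f" "f x0 \<noteq> 0"
  shows "{x. f x = 0} \<in> null_sets lborel"
  using coord_polynomial_zero_set_null[OF finite_Basis subset_refl
      real_polynomial_function_imp_coord_polynomial[OF assms(1)] assms(2)] .

text \<open>The library hides the names of the introduction rules of \<^const>\<open>real_polynomial_function\<close>.\<close>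
lemmas real_polynomial_function_linear = real_polynomial_function.intros(1)
  and real_polynomial_function_const = real_polynomial_function.intros(2)
  and real_polynomial_function_mult = real_polynomial_function.intros(4)

lemma traj_0 [simp]: "traj A 0 x = x"
  by (simp add: traj_def)

lemma traj_Suc: "traj A (Suc k) x = A *v traj A k x"
  by (simp add: traj_def)

lemma real_polynomial_function_traj_vector:
  "real_polynomial_function (\<lambda>x. traj (A :: real^'n^'n) k x $ i)"
proof (induction k arbitrary: i)
  case 0
  show ?case by (simp add: real_polynomial_function_linear bounded_linear_vec_nth)
next
  case (Suc k)
  have "real_polynomial_function (\<lambda>x. \<Sum>j\<in>UNIV. A $ i $ j * traj A k x $ j)"
    by (intro real_polynomial_function_sum real_polynomial_function_const
        real_polynomial_function_mult Suc.IH) simp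
  then show ?case
    by (simp add: traj_Suc matrix_vector_mult_def)
qed

lemma real_polynomial_function_traj_matrix:
  "real_polynomial_function (\<lambda>A :: real^'n^'n. traj A k x $ i)"
proof (induction k arbitrary: i)
  case 0
  show ?case by (simp add: real_polynomial_function_const)
next
  case (Suc k)
  have "real_polynomial_function (\<lambda>A :: real^'n^'n. A $ i $ j)" for j
    using bounded_linear_compose[OF bounded_linear_vec_nth bounded_linear_vec_nth]
    by (rule real_polynomial_function_linear)
  then have "real_polynomial_function (\<lambda>A :: real^'n^'n. \<Sum>j\<in>UNIV. A $ i $ j * traj A k x $ j)"
    by (intro real_polynomial_function_sum real_polynomial_function_mult Suc.IH) simp
  then show ?case
    by (simp add: traj_Suc matrix_vector_mult_def)
qed

lemma real_polynomial_function_det: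
  assumes "\<And>i j. real_polynomial_function (\<lambda>z. M z $ i $ j)"
  shows "real_polynomial_function (\<lambda>z. det (M z :: real^'n^'n))"
  unfolding det_def using assms
  by (intro real_polynomial_function_sum real_polynomial_function_prod
      real_polynomial_function_const real_polynomial_function_mult) auto

lemma null_sets_det_data_matrix_eq_0_vector:
  assumes "det (data_matrix \<rho> A k x') \<noteq> 0"
  shows "{x. det (data_matrix \<rho> A k x) = 0} \<in> null_sets lborel"
proof (rule real_polynomial_function_zero_set_null)
  show "real_polynomial_function (\<lambda>x. det (data_matrix \<rho> A k x))"
    unfolding data_matrix_def
    by (rule real_polynomial_function_det) (simp add: real_polynomial_function_traj_vector)
qed (rule assms)

lemma AE_invertible_data_matrix:
  assumes "absolutely_continuous lborel P" "det (data_matrix \<rho> A k x') \<noteq> 0"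
  shows "AE x in P. invertible (data_matrix \<rho> A k x)"
proof -
  have "{x. det (data_matrix \<rho> A k x) = 0} \<in> null_sets P"
    using null_sets_det_data_matrix_eq_0_vector[OF assms(2)] assms(1)
    unfolding absolutely_continuous_def by blast
  then show ?thesis
    by (rule AE_I') (auto simp: invertible_det_nz)
qed

lemma null_sets_det_data_matrix_eq_0_matrix:
  assumes "det (data_matrix \<rho> A' k x) \<noteq> 0"
  shows "{A. det (data_matrix \<rho> A k x) = 0} \<in> null_sets lborel"
proof (rule real_polynomial_function_zero_set_null)
  show "real_polynomial_function (\<lambda>A. det (data_matrix \<rho> A k x))"
    unfolding data_matrix_def
    by (rule real_polynomial_function_det) (simp add: real_polynomial_function_traj_matrix)
qed (rule assms)

lemma det_data_matrix_reindex:
  fixes \<rho> \<rho>' :: "'n::finite \<Rightarrow> nat"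
  assumes \<rho>: "bij_betw \<rho> UNIV {..<CARD('n)}" and \<rho>': "bij_betw \<rho>' UNIV {..<CARD('n)}"
  shows "det (data_matrix \<rho> A k x) = of_int (sign (inv_into UNIV \<rho>' \<circ> \<rho>)) * det (data_matrix \<rho>' A k x)"
proof -
  let ?p = "inv_into UNIV \<rho>' \<circ> \<rho>"
  have "bij_betw ?p UNIV UNIV"
    using \<rho> bij_betw_inv_into[OF \<rho>'] by (rule bij_betw_trans)
  then have p: "?p permutes UNIV" by (rule bij_imp_permutes) simp
  have "range \<rho>' = range \<rho>"
    using \<rho> \<rho>' by (simp add: bij_betw_def)
  then have "\<rho>' (?p j) = \<rho> j" for j
    by (simp add: f_inv_into_f)
  then have "data_matrix \<rho> A k x = (\<chi> i j. data_matrix \<rho>' A k x $ i $ ?p j)"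
    by (simp add: data_matrix_def del: comp_apply)
  then show ?thesis using det_permute_columns[OF p] by simp
qed

text \<open>With the coordinates ordered by \<open>\<rho>\<close>, the nilpotent shift \<open>e\<^sub>k \<mapsto> e\<^sub>k\<^sub>+\<^sub>1\<close>.\<close>
definition shift_matrix :: "('n \<Rightarrow> nat) \<Rightarrow> real^'n^'n" where
  "shift_matrix \<rho> = (\<chi> i j. if \<rho> i = Suc (\<rho> j) then 1 else 0)"

lemma traj_shift_matrix:
  fixes \<rho> :: "'n::finite \<Rightarrow> nat"
  assumes \<rho>: "bij_betw \<rho> UNIV {..<CARD('n)}" and "k < CARD('n)"
  shows "traj (shift_matrix \<rho>) k (axis (inv_into UNIV \<rho> 0) 1) = axis (inv_into UNIV \<rho> k) 1"
  using \<open>k < CARD('n)\<close>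
proof (induction k)
  case 0
  then show ?case by simp
next
  case (Suc k)
  have \<rho>_inv: "\<rho> (inv_into UNIV \<rho> m) = m" if "m < CARD('n)" for m
    using \<rho> that by (auto simp: bij_betw_def f_inv_into_f)
  have "i = inv_into UNIV \<rho> (Suc k) \<longleftrightarrow> \<rho> i = Suc k" for i
    using \<rho>_inv[OF Suc.prems] inv_into_f_f[OF bij_betw_imp_inj_on[OF \<rho>] UNIV_I, of i] by auto
  then have "column (inv_into UNIV \<rho> k) (shift_matrix \<rho>) = axis (inv_into UNIV \<rho> (Suc k)) 1"
    using \<rho>_inv[of k] Suc.prems by (auto simp: column_def shift_matrix_def vec_eq_iff axis_def)
  then show ?case
    using Suc by (simp add: traj_Suc matrix_vector_mult_basis)
qed

lemma data_matrix_shift_matrix: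
  fixes \<rho> :: "'n::finite \<Rightarrow> nat"
  assumes \<rho>: "bij_betw \<rho> UNIV {..<CARD('n)}"
  shows "data_matrix \<rho> (shift_matrix \<rho>) 0 (axis (inv_into UNIV \<rho> 0) 1) = mat 1"
proof -
  have "\<rho> j < CARD('n)" "inv_into UNIV \<rho> (\<rho> j) = j" for j
    using \<rho> by (auto simp: bij_betw_def)
  then show ?thesis
    using traj_shift_matrix[OF \<rho>] by (simp add: data_matrix_def vec_eq_iff mat_def axis_def)
qed

lemma matrix_mul_data_matrix: "A ** data_matrix \<rho> A 0 x = data_matrix \<rho> A 1 x"
  by (simp add: data_matrix_def vec_eq_iff matrix_matrix_mult_def traj_Suc matrix_vector_mult_def)

lemma matrix_mul_matrix_inv_right:
  fixes M :: "'a::semiring_1^'n^'m"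
  assumes "invertible M"
  shows "M ** matrix_inv M = mat 1"
  using assms unfolding invertible_def matrix_inv_def by (rule someI2_ex) auto

lemma matrix_eq_data_matrix_mul_inv:
  assumes "invertible (data_matrix \<rho> A 0 x)"
  shows "A = data_matrix \<rho> A 1 x ** matrix_inv (data_matrix \<rho> A 0 x)"
proof -
  have "data_matrix \<rho> A 1 x ** matrix_inv (data_matrix \<rho> A 0 x)
      = A ** (data_matrix \<rho> A 0 x ** matrix_inv (data_matrix \<rho> A 0 x))"
    by (simp only: matrix_mul_assoc matrix_mul_data_matrix)
  also have "\<dots> = A"
    using assms by (simp add: matrix_mul_matrix_inv_right)
  finally show ?thesis by simp
qed

theorem theorem23:
  "\<exists>\<A> :: (real^'n^'n) set. \<A> \<in> null_sets lborel \<and>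
    (\<forall>(S :: (real^'n) set) (U0 :: (real^'n^'n) set) (Astar :: real^'n^'n)
        (F :: (real^'n) set) (P :: (real^'n) measure) (\<rho> :: 'n \<Rightarrow> nat).
      polyhedron S \<longrightarrow> polyhedron U0 \<longrightarrow> Astar \<in> U0 - \<A> \<longrightarrow>
      F \<subseteq> safe_inf S U0 \<longrightarrow> interior F \<noteq> {} \<longrightarrow>
      prob_space P \<longrightarrow> sets P = sets lborel \<longrightarrow> absolutely_continuous lborel P \<longrightarrow>
      (AE x in P. x \<in> F) \<longrightarrow>
      bij_betw \<rho> UNIV {..<CARD('n)} \<longrightarrow>
      (AE x in P. x \<in> safe_inf S U0 \<and>
                  invertible (data_matrix \<rho> Astar 0 x) \<and>
                  Astar = data_matrix \<rho> Astar 1 x ** matrix_inv (data_matrix \<rho> Astar 0 x)))"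
proof -
  obtain \<rho>0 :: "'n \<Rightarrow> nat" where \<rho>0: "bij_betw \<rho>0 UNIV {..<CARD('n)}"
    using ex_bij_betw_finite_nat[of "UNIV :: 'n set"] by (auto simp: atLeast0LessThan)
  define e0 :: "real^'n" where "e0 = axis (inv_into UNIV \<rho>0 0) 1"
  define \<A> :: "(real^'n^'n) set" where "\<A> = {A. det (data_matrix \<rho>0 A 0 e0) = 0}"
  show ?thesis
  proof (intro exI[of _ \<A>] conjI allI impI)
    show "\<A> \<in> null_sets lborel"
      unfolding \<A>_def e0_def
      by (rule null_sets_det_data_matrix_eq_0_matrix[of \<rho>0 "shift_matrix \<rho>0"])
        (simp add: data_matrix_shift_matrix[OF \<rho>0])
    fix S U0 A F P and \<rho> :: "'n \<Rightarrow> nat"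
    assume "A \<in> U0 - \<A>" and F: "F \<subseteq> safe_inf S U0" and "absolutely_continuous lborel P"
      and "AE x in P. x \<in> F" and \<rho>: "bij_betw \<rho> UNIV {..<CARD('n)}"
    have "det (data_matrix \<rho> A 0 e0) \<noteq> 0"
      using \<open>A \<in> U0 - \<A>\<close> det_data_matrix_reindex[OF \<rho> \<rho>0] by (simp add: \<A>_def)
    with \<open>absolutely_continuous lborel P\<close> have "AE x in P. invertible (data_matrix \<rho> A 0 x)"
      by (rule AE_invertible_data_matrix)
    with \<open>AE x in P. x \<in> F\<close> show "AE x in P. x \<in> safe_inf S U0 \<and> invertible (data_matrix \<rho> A 0 x) \<and>
        A = data_matrix \<rho> A 1 x ** matrix_inv (data_matrix \<rho> A 0 x)"
      by eventually_elim (use F matrix_eq_data_matrix_mul_inv in blast)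
  qed
qed

end
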